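(* Let $\lambda$ be a partition and $\pi$ an $R_\lambda$-permutation. If $\pi$ is $R_\lambda$-312-avoiding, then $\mathcal{D}_\lambda(\pi)=[Y_\lambda(\pi)]$, i.e. $\mathcal{D}_\lambda(\pi)=\{T\in\mathcal{T}_\lambda: T\le Y_\lambda(\pi)\}$.
   Context: Fix $n\ge1$; $[m]=\{1,\dots,m\}$. A partition is $\lambda=(\lambda_1\ge\cdots\ge\lambda_n\ge0)\in\mathbb{Z}^n$, with boxes $(j,i)$ (column $j$, row $i$), $1\le j\le\lambda_1$, $1\le i\le\zeta_j:=\#\{i:\lambda_i\ge j\}$; $R_\lambda:=\{\zeta_j:\zeta_j<n\}$ with elements $q_1<\dots<q_r$, $q_0:=0$, $q_{r+1}:=n$. An $R_\lambda$-permutation is a permutation $\pi$ of $[n]$ (one-line notation) strictly increasing on each index set $\{q_{h-1}+1,\dots,q_h\}$; it is $R_\lambda$-312-containing if there exist $h\in[r-1]$ and $1\le a\le q_h<b\le q_{h+1}<c\le n$ with $\pi_b<\pi_c<\pi_a$, and $R_\lambda$-312-avoiding otherwise. A tableau of shape $\lambda$ fills the boxes with values in $[n]$, strictly increasing down columns and weakly increasing along rows; $\mathcal{T}_\lambda$ is their set, ordered entrywise. The $\lambda$-key $Y_\lambda(\pi)$ is the tableau whose column $j$ consists of $\{\pi_1,\dots,\pi_{\zeta_j}\}$ in increasing order. Scanning tableau: the earliest weakly increasing subsequence (EWIS) of $x_1,x_2,\dots$ is $x_{i_1},x_{i_2},\dots$ with $i_1=1$ and $i_u$ the smallest index $>i_{u-1}$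 with $x_{i_u}\ge x_{i_{u-1}}$. For $T\in\mathcal{T}_\lambda$ and $l\in[\lambda_1]$, column $l$ of $S(T)$ is computed as follows: consider the boxes of $T$ in columns $l,\dots,\lambda_1$, initially unmarked; for $k=\zeta_l,\zeta_l-1,\dots,1$ in turn, form the sequence of lowest unmarked entries of columns $l,l+1,\dots$ (left to right, over columns still having unmarked boxes), take its EWIS, mark the contributing boxes, and set the entry of $S(T)$ at column $l$, row $k$ to the last term of the EWIS. The set of Demazure tableaux is $\mathcal{D}_\lambda(\pi):=\{T\in\mathcal{T}_\lambda:S(T)\le Y_\lambda(\pi)\}$. *)

theory Defs
  imports Main
begin

text \<open>Partitions lam = (lam 1 \<ge> ... \<ge> lam n \<ge> 0), given as a function on indices 1..n.
  Boxes are (j,i): column j, row i.\<close>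

definition partition :: "nat \<Rightarrow> (nat \<Rightarrow> nat) \<Rightarrow> bool" where
  "partition n lam \<longleftrightarrow> (\<forall>i. 1 \<le> i \<and> i < n \<longrightarrow> lam (i+1) \<le> lam i)"

definition zeta :: "nat \<Rightarrow> (nat \<Rightarrow> nat) \<Rightarrow> nat \<Rightarrow> nat" where
  "zeta n lam j = card {i \<in> {1..n}. j \<le> lam i}"

definition in_shape :: "nat \<Rightarrow> (nat \<Rightarrow> nat) \<Rightarrow> nat \<Rightarrow> nat \<Rightarrow> bool" where
  "in_shape n lam j i \<longleftrightarrow> 1 \<le> j \<and> j \<le> lam 1 \<and> 1 \<le> i \<and> i \<le> zeta n lam j"

definition Rset :: "nat \<Rightarrow> (nat \<Rightarrow> nat) \<Rightarrow> nat set" where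
  "Rset n lam = {zeta n lam j | j. 1 \<le> j \<and> j \<le> lam 1 \<and> zeta n lam j < n}"

definition qq :: "nat \<Rightarrow> (nat \<Rightarrow> nat) \<Rightarrow> nat \<Rightarrow> nat" where
  "qq n lam h = (if h = 0 then 0
     else if h \<le> card (Rset n lam) then sorted_list_of_set (Rset n lam) ! (h - 1) else n)"

definition R_perm :: "nat \<Rightarrow> (nat \<Rightarrow> nat) \<Rightarrow> (nat \<Rightarrow> nat) \<Rightarrow> bool" where
  "R_perm n lam \<pi> \<longleftrightarrow> bij_betw \<pi> {1..n} {1..n} \<and>
     (\<forall>h \<in> {1..card (Rset n lam) + 1}. \<forall>a b.
        qq n lam (h - 1) + 1 \<le> a \<and> a < b \<and> b \<le> qq n lam h \<longrightarrow> \<pi> a < \<pi> b)"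

definition R_312_containing :: "nat \<Rightarrow> (nat \<Rightarrow> nat) \<Rightarrow> (nat \<Rightarrow> nat) \<Rightarrow> bool" where
  "R_312_containing n lam \<pi> \<longleftrightarrow> (\<exists>h a b c. 1 \<le> h \<and> h \<le> card (Rset n lam) - 1 \<and>
     1 \<le> a \<and> a \<le> qq n lam h \<and> qq n lam h < b \<and> b \<le> qq n lam (h+1) \<and>
     qq n lam (h+1) < c \<and> c \<le> n \<and> \<pi> b < \<pi> c \<and> \<pi> c < \<pi> a)"

text \<open>Tableaux are functions column \<Rightarrow> row \<Rightarrow> entry, normalised to 0 outside the shape.\<close>
definition tableau :: "nat \<Rightarrow> (nat \<Rightarrow> nat) \<Rightarrow> (nat \<Rightarrow> nat \<Rightarrow> nat) \<Rightarrow> bool" where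
  "tableau n lam T \<longleftrightarrow>
     (\<forall>j i. in_shape n lam j i \<longrightarrow> 1 \<le> T j i \<and> T j i \<le> n) \<and>
     (\<forall>j i. in_shape n lam j i \<and> in_shape n lam j (i+1) \<longrightarrow> T j i < T j (i+1)) \<and>
     (\<forall>j i. in_shape n lam j i \<and> in_shape n lam (j+1) i \<longrightarrow> T j i \<le> T (j+1) i) \<and>
     (\<forall>j i. \<not> in_shape n lam j i \<longrightarrow> T j i = 0)"

definition Tabs :: "nat \<Rightarrow> (nat \<Rightarrow> nat) \<Rightarrow> (nat \<Rightarrow> nat \<Rightarrow> nat) set" where
  "Tabs n lam = {T. tableau n lam T}"

definition tab_le :: "nat \<Rightarrow> (nat \<Rightarrow> nat) \<Rightarrow> (nat \<Rightarrow> nat \<Rightarrow> nat) \<Rightarrow> (nat \<Rightarrow> nat \<Rightarrow> nat) \<Rightarrow> bool" where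
  "tab_le n lam T U \<longleftrightarrow> (\<forall>j i. in_shape n lam j i \<longrightarrow> T j i \<le> U j i)"

definition key :: "nat \<Rightarrow> (nat \<Rightarrow> nat) \<Rightarrow> (nat \<Rightarrow> nat) \<Rightarrow> nat \<Rightarrow> nat \<Rightarrow> nat" where
  "key n lam \<pi> j i = (if in_shape n lam j i
      then sorted_list_of_set (\<pi> ` {1..zeta n lam j}) ! (i - 1) else 0)"

fun ewis_from :: "nat \<Rightarrow> ('a \<times> nat) list \<Rightarrow> ('a \<times> nat) list" where
  "ewis_from cur [] = []"
| "ewis_from cur (x # xs) =
     (if cur \<le> snd x then x # ewis_from (snd x) xs else ewis_from cur xs)"

fun ewis :: "('a \<times> nat) list \<Rightarrow> ('a \<times> nat) list" where
  "ewis [] = []"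
| "ewis (x # xs) = x # ewis_from (snd x) xs"

text \<open>Scanning: the unmarked boxes of each column c form rows 1..m c, since marking
  always removes the lowest unmarked box.  The sequence lists (column, lowest unmarked
  entry) for the columns l..lam 1 still having unmarked boxes.\<close>
definition scan_seq :: "nat \<Rightarrow> (nat \<Rightarrow> nat) \<Rightarrow> (nat \<Rightarrow> nat \<Rightarrow> nat) \<Rightarrow> nat \<Rightarrow> (nat \<Rightarrow> nat)
    \<Rightarrow> (nat \<times> nat) list" where
  "scan_seq n lam T l m = map (\<lambda>c. (c, T c (m c))) (filter (\<lambda>c. 0 < m c) [l..<lam 1 + 1])"

definition scan_step :: "nat \<Rightarrow> (nat \<Rightarrow> nat) \<Rightarrow> (nat \<Rightarrow> nat \<Rightarrow> nat) \<Rightarrow> nat \<Rightarrow> (nat \<Rightarrow> nat)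
    \<Rightarrow> (nat \<Rightarrow> nat)" where
  "scan_step n lam T l m =
     (let E = ewis (scan_seq n lam T l m) in
      (\<lambda>c. if c \<in> fst ` set E then m c - 1 else m c))"

definition scan_state :: "nat \<Rightarrow> (nat \<Rightarrow> nat) \<Rightarrow> (nat \<Rightarrow> nat \<Rightarrow> nat) \<Rightarrow> nat \<Rightarrow> nat
    \<Rightarrow> (nat \<Rightarrow> nat)" where
  "scan_state n lam T l t = (scan_step n lam T l ^^ t)
     (\<lambda>c. if l \<le> c \<and> c \<le> lam 1 then zeta n lam c else 0)"

text \<open>Entry of S(T) at column l, row k: computed at step zeta l - k (k = zeta l, ..., 1).\<close>
definition scanning :: "nat \<Rightarrow> (nat \<Rightarrow> nat) \<Rightarrow> (nat \<Rightarrow> nat \<Rightarrow> nat) \<Rightarrow> nat \<Rightarrow> nat \<Rightarrow> nat" where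
  "scanning n lam T l k = (if in_shape n lam l k
     then snd (last (ewis (scan_seq n lam T l (scan_state n lam T l (zeta n lam l - k)))))
     else 0)"

definition Demazure :: "nat \<Rightarrow> (nat \<Rightarrow> nat) \<Rightarrow> (nat \<Rightarrow> nat) \<Rightarrow> (nat \<Rightarrow> nat \<Rightarrow> nat) set" where
  "Demazure n lam \<pi> = {T \<in> Tabs n lam. tab_le n lam (scanning n lam T) (key n lam \<pi>)}"

end

theory Submission
  imports Defs
begin

text \<open>Scanning only raises entries: the EWIS that produces the entry of S(T) in column l, row k
  starts at T(l,k), so S(T) \<le> Y forces T \<le> Y. Conversely let T \<le> Y. The entry x produced in
  column l, row k is an entry T(c,i) with c \<ge> l and i \<le> k, and the entries produced in a column
  strictly decrease from the bottom row upwards. As Y(l,k) is the k-th smallest element of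
  B = \<pi>{1..\<zeta>_l}, the claim x \<le> Y(l,k) says that fewer than k elements of B lie below x.
  If x \<in> B this follows from the strict decrease. Otherwise x \<le> Y(c,i) provides an element of
  A = \<pi>{1..\<zeta>_c} above x, and an element of B - A below x would complete an R-312 pattern;
  so the elements of B below x are those of A below x, and there are fewer than i of them.\<close>

section \<open>Ranks in sorted lists\<close>

lemma sorted_wrt_less_take_eq:
  fixes xs :: "'a::linorder list"
  assumes "sorted_wrt (<) xs" "k < length xs"
  shows "{a \<in> set xs. a < xs ! k} = set (take k xs)"
proof safe
  fix a assume "a \<in> set xs" "a < xs ! k"
  then obtain j where j: "j < length xs" "a = xs ! j" by (auto simp: in_set_conv_nth)
  have "j < k"
  proof (rule ccontr)
    assume "\<not> j < k"
    then have "xs ! k \<le> xs ! j"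
      using sorted_nth_mono[OF strict_sorted_imp_sorted[OF assms(1)], of k j] j by simp
    then show False using \<open>a < xs ! k\<close> j by simp
  qed
  then show "a \<in> set (take k xs)" using j by (auto simp: in_set_conv_nth)
next
  fix a assume "a \<in> set (take k xs)"
  then obtain j where "j < k" "a = xs ! j" using assms(2) by (auto simp: in_set_conv_nth)
  then show "a < xs ! k" using assms sorted_wrt_nth_less by blast
qed (auto dest: in_set_takeD)

lemma le_nth_sorted_list_of_set_iff:
  fixes A :: "'a::linorder set"
  assumes "finite A" "k < card A"
  shows "x \<le> sorted_list_of_set A ! k \<longleftrightarrow> card {a \<in> A. a < x} \<le> k"
proof -
  let ?s = "sorted_list_of_set A"
  have below: "{a \<in> A. a < ?s ! k} = set (take k ?s)"
    using sorted_wrt_less_take_eq[of ?s k] assms by simp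
  have card_below: "card {a \<in> A. a < ?s ! k} = k"
    unfolding below using assms by (simp add: distinct_card)
  show ?thesis
  proof
    assume "x \<le> ?s ! k"
    then have "{a \<in> A. a < x} \<subseteq> {a \<in> A. a < ?s ! k}" by auto
    then have "card {a \<in> A. a < x} \<le> card {a \<in> A. a < ?s ! k}"
      by (rule card_mono[rotated]) (use assms(1) in simp)
    then show "card {a \<in> A. a < x} \<le> k" using card_below by simp
  next
    assume le: "card {a \<in> A. a < x} \<le> k"
    show "x \<le> ?s ! k"
    proof (rule ccontr)
      assume "\<not> x \<le> ?s ! k"
      moreover have "?s ! k \<in> A" using assms by (metis length_sorted_list_of_set nth_mem set_sorted_list_of_set)
      ultimately have "insert (?s ! k) {a \<in> A. a < ?s ! k} \<subseteq> {a \<in> A. a < x}" by auto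
      then have "card (insert (?s ! k) {a \<in> A. a < ?s ! k}) \<le> card {a \<in> A. a < x}"
        by (rule card_mono[rotated]) (use assms(1) in simp)
      then have "Suc k \<le> card {a \<in> A. a < x}" using card_below assms(1) by simp
      then show False using le by simp
    qed
  qed
qed

section \<open>Earliest weakly increasing subsequences\<close>

lemma set_ewis_from_subset: "set (ewis_from cur xs) \<subseteq> set xs"
  by (induction xs arbitrary: cur) auto

lemma ewis_eq_ewis_from: "ewis xs = ewis_from 0 xs"
  by (cases xs) auto

lemma set_ewis_subset: "set (ewis xs) \<subseteq> set xs"
  using set_ewis_from_subset ewis_eq_ewis_from by metis

lemma hd_in_ewis: "xs \<noteq> [] \<Longrightarrow> hd xs \<in> set (ewis xs)"
  by (cases xs) auto

lemma ewis_from_eq_Nil_iff: "ewis_from cur xs = [] \<longleftrightarrow> (\<forall>y\<in>set xs. snd y < cur)"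
  by (induction xs arbitrary: cur) auto

lemma last_ewis_from_ge:
  "ewis_from cur xs \<noteq> [] \<Longrightarrow>
   cur \<le> snd (last (ewis_from cur xs)) \<and> (\<forall>y\<in>set xs. snd y \<le> snd (last (ewis_from cur xs)))"
proof (induction xs arbitrary: cur)
  case Nil
  then show ?case by simp
next
  case (Cons a xs)
  show ?case
  proof (cases "cur \<le> snd a")
    case True
    then show ?thesis
    proof (cases "ewis_from (snd a) xs = []")
      case True
      then show ?thesis using \<open>cur \<le> snd a\<close> by (auto simp: ewis_from_eq_Nil_iff less_imp_le)
    next
      case False
      then show ?thesis using Cons.IH[of "snd a"] \<open>cur \<le> snd a\<close> by auto
    qed
  next
    case False
    then have "ewis_from cur xs \<noteq> []" using Cons.prems by simp
    then show ?thesis using Cons.IH[of cur] False by (auto intro: order.trans[of "snd a" cur])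
  qed
qed

lemma last_ewis_in_set: "xs \<noteq> [] \<Longrightarrow> last (ewis xs) \<in> set xs"
  using set_ewis_subset hd_in_ewis by (metis empty_iff last_in_set list.set(1) subsetD)

lemma le_last_ewis: "y \<in> set xs \<Longrightarrow> snd y \<le> snd (last (ewis xs))"
  using last_ewis_from_ge[of 0 xs] ewis_eq_ewis_from[of xs] by (cases xs) auto

lemma mem_ewis_from_iff:
  "distinct (ys @ x # zs) \<Longrightarrow>
   x \<in> set (ewis_from cur (ys @ x # zs)) \<longleftrightarrow> cur \<le> snd x \<and> (\<forall>y\<in>set ys. snd y \<le> snd x)"
proof (induction ys arbitrary: cur)
  case Nil
  then show ?case using set_ewis_from_subset[of "snd x" zs] set_ewis_from_subset[of cur zs] by auto
next
  case (Cons a ys)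
  then show ?case by (auto simp: le_trans)
qed

lemma less_last_ewis_if_not_mem:
  assumes "distinct xs" "x \<in> set xs" "x \<notin> set (ewis xs)"
  shows "snd x < snd (last (ewis xs))"
proof -
  obtain ys zs where xs: "xs = ys @ x # zs" using assms(2) by (meson split_list)
  then obtain y where "y \<in> set ys" "snd x < snd y"
    using mem_ewis_from_iff[of ys x zs 0] assms ewis_eq_ewis_from[of xs] by force
  moreover have "snd y \<le> snd (last (ewis xs))" using le_last_ewis[of y xs] xs \<open>y \<in> set ys\<close> by simp
  ultimately show ?thesis by simp
qed

lemma ewis_consecutive_mem:
  assumes "distinct (ys @ x # y # zs)" "x \<in> set (ewis (ys @ x # y # zs))" "snd x \<le> snd y"
  shows "y \<in> set (ewis (ys @ x # y # zs))"
proof -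
  have "\<forall>u\<in>set ys. snd u \<le> snd x"
    using assms(1,2) mem_ewis_from_iff[of ys x "y # zs" 0] by (simp add: ewis_eq_ewis_from)
  then show ?thesis
    using assms mem_ewis_from_iff[of "ys @ [x]" y zs 0] by (auto simp: ewis_eq_ewis_from)
qed

section \<open>The scanning process\<close>

lemma zeta_antimono: "c \<le> d \<Longrightarrow> zeta n lam d \<le> zeta n lam c"
  unfolding zeta_def by (rule card_mono) auto

lemma zeta_le: "zeta n lam c \<le> n"
proof -
  have "card {i \<in> {1..n}. c \<le> lam i} \<le> card {1..n}" by (rule card_mono) auto
  then show ?thesis unfolding zeta_def by simp
qed

lemma tableau_column_less:
  assumes T: "tableau n lam T" and "in_shape n lam c j" "in_shape n lam c j'" "j < j'"
  shows "T c j < T c j'"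
  using assms(3,4)
proof (induction j')
  case 0
  then show ?case by simp
next
  case (Suc j')
  have shape: "in_shape n lam c j'" using Suc.prems assms(2) unfolding in_shape_def by auto
  then have "T c j' < T c (Suc j')" using T Suc.prems(1) unfolding tableau_def by simp
  then show ?case using Suc shape by (cases "j = j'") auto
qed

lemma set_scan_seq:
  "set (scan_seq n lam T l m) = (\<lambda>c. (c, T c (m c))) ` {c. l \<le> c \<and> c \<le> lam 1 \<and> 0 < m c}"
  unfolding scan_seq_def by auto

lemma distinct_scan_seq: "distinct (scan_seq n lam T l m)"
  unfolding scan_seq_def by (simp add: distinct_map inj_on_def)

lemma scan_seq_Cons:
  assumes "l \<le> lam 1" "0 < m l"
  shows "scan_seq n lam T l m = (l, T l (m l)) # scan_seq n lam T (Suc l) m"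
  using assms upt_conv_Cons[of l "lam 1 + 1"] unfolding scan_seq_def by simp

lemma scan_seq_adjacent:
  assumes "l \<le> c" "Suc c \<le> lam 1" "0 < m c" "0 < m (Suc c)"
  obtains ys zs where
    "scan_seq n lam T l m = ys @ (c, T c (m c)) # (Suc c, T (Suc c) (m (Suc c))) # zs"
proof -
  have "[l..<lam 1 + 1] = [l..<c] @ c # Suc c # [Suc (Suc c)..<lam 1 + 1]"
    using assms upt_add_eq_append[of l c "lam 1 + 1 - c"] by (simp add: upt_conv_Cons)
  then show ?thesis using that assms unfolding scan_seq_def by simp
qed

lemma scan_step_apply:
  "scan_step n lam T l m c =
     (if (c, T c (m c)) \<in> set (ewis (scan_seq n lam T l m)) then m c - 1 else m c)"
proof -
  have "c \<in> fst ` set (ewis (scan_seq n lam T l m)) \<longleftrightarrow>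
        (c, T c (m c)) \<in> set (ewis (scan_seq n lam T l m))"
    using set_ewis_subset[of "scan_seq n lam T l m"] by (force simp: set_scan_seq)
  then show ?thesis unfolding scan_step_def by simp
qed

lemma scan_state_Suc:
  "scan_state n lam T l (Suc t) = scan_step n lam T l (scan_state n lam T l t)"
  unfolding scan_state_def by simp

text \<open>Here m c is the number of unmarked boxes of column c after t scanning steps.\<close>

definition scan_invariant :: "nat \<Rightarrow> (nat \<Rightarrow> nat) \<Rightarrow> nat \<Rightarrow> nat \<Rightarrow> (nat \<Rightarrow> nat) \<Rightarrow> bool" where
  "scan_invariant n lam l t m \<longleftrightarrow> m l = zeta n lam l - t \<and>
     (\<forall>c. l \<le> c \<and> c \<le> lam 1 \<longrightarrow> m c \<le> zeta n lam c) \<and>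
     (\<forall>c. l \<le> c \<and> c < lam 1 \<longrightarrow> m (Suc c) \<le> m c)"

lemma scan_invariant_le_first:
  assumes "scan_invariant n lam l t m" "l \<le> c" "c \<le> lam 1"
  shows "m c \<le> m l"
  using assms(2,3)
proof (induction c rule: dec_induct)
  case base
  then show ?case by simp
next
  case (step d)
  then show ?case
    using assms(1) unfolding scan_invariant_def by (meson Suc_le_lessD le_trans less_imp_le_nat)
qed

lemma scan_step_marks_next_column:
  assumes T: "tableau n lam T" and c: "1 \<le> l" "l \<le> c" "Suc c \<le> lam 1"
    and m: "0 < m c" "m (Suc c) = m c" "m (Suc c) \<le> zeta n lam (Suc c)"
    and marked: "(c, T c (m c)) \<in> set (ewis (scan_seq n lam T l m))"
  shows "(Suc c, T (Suc c) (m (Suc c))) \<in> set (ewis (scan_seq n lam T l m))"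
proof -
  have "0 < m (Suc c)" using m by simp
  then obtain ys zs where split:
    "scan_seq n lam T l m = ys @ (c, T c (m c)) # (Suc c, T (Suc c) (m (Suc c))) # zs"
    using scan_seq_adjacent[of l c lam m n T] c m(1) by blast
  have "in_shape n lam (Suc c) (m c)" using c m unfolding in_shape_def by auto
  moreover have "in_shape n lam c (m c)"
    using calculation c zeta_antimono[of c "Suc c" n lam] unfolding in_shape_def by auto
  ultimately have "T c (m c) \<le> T (Suc c) (m (Suc c))"
    using T m(2) unfolding tableau_def by simp
  then show ?thesis
    using ewis_consecutive_mem[of ys] distinct_scan_seq[of n lam T l m] marked
    unfolding split by simp
qed

lemma scan_invariant_step:
  assumes T: "tableau n lam T" and l: "1 \<le> l" "l \<le> lam 1"
    and inv: "scan_invariant n lam l t m" and t: "t < zeta n lam l"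
  shows "scan_invariant n lam l (Suc t) (scan_step n lam T l m)"
proof -
  let ?E = "set (ewis (scan_seq n lam T l m))"
  have "0 < m l" using inv t unfolding scan_invariant_def by simp
  then have "(l, T l (m l)) \<in> ?E"
    using hd_in_ewis scan_seq_Cons[of l lam m] l by (metis list.distinct(1) list.sel(1))
  then have first: "scan_step n lam T l m l = zeta n lam l - Suc t"
    using inv unfolding scan_invariant_def scan_step_apply by simp
  have bounded: "scan_step n lam T l m c \<le> zeta n lam c" if "l \<le> c" "c \<le> lam 1" for c
    using inv that unfolding scan_invariant_def scan_step_apply by auto
  have antitone: "scan_step n lam T l m (Suc c) \<le> scan_step n lam T l m c"
    if c: "l \<le> c" "c < lam 1" for c
  proof -
    have le: "m (Suc c) \<le> m c" "m (Suc c) \<le> zeta n lam (Suc c)"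
      using inv c unfolding scan_invariant_def by auto
    show ?thesis
    proof (cases "m (Suc c) < m c")
      case True
      then show ?thesis unfolding scan_step_apply by auto
    next
      case False
      then have "m (Suc c) = m c" using le by simp
      then show ?thesis
        using scan_step_marks_next_column[OF T l(1) c(1), of m] c le
        unfolding scan_step_apply by (cases "m c = 0") (auto simp: Suc_le_eq)
    qed
  qed
  show ?thesis unfolding scan_invariant_def using first bounded antitone by blast
qed

lemma scan_invariant_scan_state:
  assumes T: "tableau n lam T" and l: "1 \<le> l" "l \<le> lam 1"
  shows "t \<le> zeta n lam l \<Longrightarrow> scan_invariant n lam l t (scan_state n lam T l t)"
proof (induction t)
  case 0
  show ?case unfolding scan_invariant_def scan_state_def using zeta_antimono l by auto
next
  case (Suc t)
  then show ?case using scan_invariant_step[OF T l] by (simp add: scan_state_Suc)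
qed

definition scan_output :: "nat \<Rightarrow> (nat \<Rightarrow> nat) \<Rightarrow> (nat \<Rightarrow> nat \<Rightarrow> nat) \<Rightarrow> nat \<Rightarrow> nat \<Rightarrow> nat" where
  "scan_output n lam T l t = snd (last (ewis (scan_seq n lam T l (scan_state n lam T l t))))"

lemma scanning_eq_scan_output:
  "in_shape n lam l k \<Longrightarrow> scanning n lam T l k = scan_output n lam T l (zeta n lam l - k)"
  unfolding scanning_def scan_output_def by simp

context
  fixes n lam T l t
  assumes T: "tableau n lam T" and l: "1 \<le> l" "l \<le> lam 1" and t: "t < zeta n lam l"
begin

lemma scan_seq_scan_state_Cons:
  "scan_seq n lam T l (scan_state n lam T l t) =
     (l, T l (zeta n lam l - t)) # scan_seq n lam T (Suc l) (scan_state n lam T l t)"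
proof -
  have "scan_state n lam T l t l = zeta n lam l - t"
    using scan_invariant_scan_state[OF T l] t unfolding scan_invariant_def by simp
  then show ?thesis using scan_seq_Cons[of l lam "scan_state n lam T l t" n T] l t by simp
qed

lemma first_le_scan_output: "T l (zeta n lam l - t) \<le> scan_output n lam T l t"
proof -
  have "(l, T l (zeta n lam l - t)) \<in> set (scan_seq n lam T l (scan_state n lam T l t))"
    by (simp add: scan_seq_scan_state_Cons)
  then show ?thesis unfolding scan_output_def using le_last_ewis by fastforce
qed

lemma scan_output_attained:
  "\<exists>c i. l \<le> c \<and> in_shape n lam c i \<and> i \<le> zeta n lam l - t \<and> scan_output n lam T l t = T c i"
proof -
  let ?m = "scan_state n lam T l t"
  have inv: "scan_invariant n lam l t ?m" using scan_invariant_scan_state[OF T l] t by simp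
  have "last (ewis (scan_seq n lam T l ?m)) \<in> set (scan_seq n lam T l ?m)"
    using last_ewis_in_set[of "scan_seq n lam T l ?m"] by (simp add: scan_seq_scan_state_Cons)
  then obtain c where c: "l \<le> c" "c \<le> lam 1" "0 < ?m c"
    and out: "scan_output n lam T l t = T c (?m c)"
    unfolding scan_output_def by (auto simp: set_scan_seq)
  have "?m c \<le> ?m l" "?m c \<le> zeta n lam c"
    using scan_invariant_le_first[OF inv c(1,2)] inv c unfolding scan_invariant_def by auto
  then have "l \<le> c \<and> in_shape n lam c (?m c) \<and> ?m c \<le> zeta n lam l - t"
    using c l inv unfolding in_shape_def scan_invariant_def by auto
  then show ?thesis using out by blast
qed

lemma scan_output_Suc_less:
  assumes "Suc t < zeta n lam l"
  shows "scan_output n lam T l (Suc t) < scan_output n lam T l t"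
proof -
  let ?m = "scan_state n lam T l t"
  let ?s = "scan_seq n lam T l ?m"
  have inv: "scan_invariant n lam l t ?m" using scan_invariant_scan_state[OF T l] t by simp
  have below: "snd y < scan_output n lam T l t"
    if y: "y \<in> set (scan_seq n lam T l (scan_step n lam T l ?m))" for y
  proof -
    obtain d where d: "l \<le> d" "d \<le> lam 1" "0 < scan_step n lam T l ?m d"
      and y_eq: "y = (d, T d (scan_step n lam T l ?m d))"
      using y by (auto simp: set_scan_seq)
    have d_in: "(d, T d (?m d)) \<in> set ?s" and "?m d \<le> zeta n lam d"
      using d inv unfolding scan_step_apply scan_invariant_def
      by (auto simp: set_scan_seq split: if_splits)
    show ?thesis
    proof (cases "(d, T d (?m d)) \<in> set (ewis ?s)")
      case True
      then have "T d (scan_step n lam T l ?m d) < T d (?m d)"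
        using d \<open>?m d \<le> zeta n lam d\<close> l unfolding scan_step_apply
        by (intro tableau_column_less[OF T]) (auto simp: in_shape_def)
      then show ?thesis
        using le_last_ewis[OF d_in] y_eq unfolding scan_output_def by simp
    next
      case False
      then show ?thesis
        using less_last_ewis_if_not_mem[OF distinct_scan_seq d_in] y_eq d
        unfolding scan_output_def scan_step_apply by simp
    qed
  qed
  have "0 < scan_state n lam T l (Suc t) l"
    using scan_invariant_scan_state[OF T l, of "Suc t"] assms unfolding scan_invariant_def by simp
  then have "scan_seq n lam T l (scan_step n lam T l ?m) \<noteq> []"
    using scan_seq_Cons[of l lam "scan_state n lam T l (Suc t)" n T] l by (simp add: scan_state_Suc)
  then show ?thesis
    using below[OF last_ewis_in_set] unfolding scan_output_def scan_state_Suc by simp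
qed

end

section \<open>Keys of R-312-avoiding permutations\<close>

lemma card_key_column:
  assumes "bij_betw \<pi> {1..n} {1..n}"
  shows "card (\<pi> ` {1..zeta n lam c}) = zeta n lam c"
proof -
  have "{1..zeta n lam c} \<subseteq> {1..n}" using zeta_le[of n lam c] by auto
  then have "inj_on \<pi> {1..zeta n lam c}"
    using inj_on_subset[OF bij_betw_imp_inj_on[OF assms]] by blast
  then show ?thesis by (simp add: card_image)
qed

lemma le_key_iff:
  assumes "bij_betw \<pi> {1..n} {1..n}" "in_shape n lam c i"
  shows "x \<le> key n lam \<pi> c i \<longleftrightarrow> card {a \<in> \<pi> ` {1..zeta n lam c}. a < x} < i"
proof -
  have "i - 1 < card (\<pi> ` {1..zeta n lam c})" "1 \<le> i"
    using assms card_key_column[OF assms(1)] unfolding in_shape_def by auto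
  then show ?thesis
    using le_nth_sorted_list_of_set_iff[of "\<pi> ` {1..zeta n lam c}" "i - 1" x] assms(2)
    unfolding key_def by auto
qed

lemma finite_Rset: "finite (Rset n lam)"
proof -
  have "Rset n lam \<subseteq> zeta n lam ` {1..lam 1}" unfolding Rset_def by auto
  then show ?thesis using finite_subset by blast
qed

lemma R_312_avoiding_across:
  assumes nc: "\<not> R_312_containing n lam \<pi>" and R: "u \<in> Rset n lam" "v \<in> Rset n lam"
    and pos: "1 \<le> p" "p \<le> u" "u < q" "q \<le> v" "v < q'" "q' \<le> n" and "\<pi> q < \<pi> q'"
  shows "\<pi> p \<le> \<pi> q'"
proof (rule ccontr)
  assume "\<not> \<pi> p \<le> \<pi> q'"
  let ?R = "Rset n lam"
  let ?s = "sorted_list_of_set ?R"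
  txt \<open>With j elements of R below q, the j-th and (j+1)-st elements of R enclose q;
    the first is at least u and the second at most v.\<close>
  define j where "j = card {r \<in> ?R. r < q}"
  have fin: "finite ?R" by (rule finite_Rset)
  have "{r \<in> ?R. r < q} \<noteq> {}" using R pos by auto
  then have "1 \<le> j" unfolding j_def using fin by (simp add: Suc_le_eq card_gt_0_iff)
  have "v \<in> ?R - {r \<in> ?R. r < q}" using R pos by simp
  then have "{r \<in> ?R. r < q} \<subset> ?R" by blast
  then have "j < card ?R" unfolding j_def by (rule psubset_card_mono[OF fin])
  have "u \<in> {r \<in> ?R. r < q} - {r \<in> ?R. r < u}" using R pos by simp
  then have "{r \<in> ?R. r < u} \<subset> {r \<in> ?R. r < q}" using pos by auto
  then have "card {r \<in> ?R. r < u} < j"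
    unfolding j_def using fin by (intro psubset_card_mono) auto
  then have "u \<le> ?s ! (j - 1)"
    using le_nth_sorted_list_of_set_iff[OF fin, of "j - 1" u] \<open>j < card ?R\<close> by simp
  then have "p \<le> ?s ! (j - 1)" using pos by simp
  moreover have "\<not> q \<le> ?s ! (j - 1)"
    using le_nth_sorted_list_of_set_iff[OF fin, of "j - 1" q] \<open>j < card ?R\<close> \<open>1 \<le> j\<close>
    unfolding j_def by simp
  moreover have "q \<le> ?s ! j"
    using le_nth_sorted_list_of_set_iff[OF fin, of j q] \<open>j < card ?R\<close> unfolding j_def by simp
  moreover have "?s ! j < q'"
  proof -
    have "insert v {r \<in> ?R. r < q} \<subseteq> {r \<in> ?R. r < Suc v}" using R pos by auto
    then have "card (insert v {r \<in> ?R. r < q}) \<le> card {r \<in> ?R. r < Suc v}"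
      using fin by (intro card_mono) auto
    then have "j < card {r \<in> ?R. r < Suc v}"
      unfolding j_def using fin pos by simp
    then show ?thesis
      using le_nth_sorted_list_of_set_iff[OF fin, of j "Suc v"] \<open>j < card ?R\<close> pos by simp
  qed
  moreover have "qq n lam j = ?s ! (j - 1)" "qq n lam (j + 1) = ?s ! j"
    using \<open>1 \<le> j\<close> \<open>j < card ?R\<close> unfolding qq_def by auto
  ultimately have "1 \<le> j \<and> j \<le> card ?R - 1 \<and> 1 \<le> p \<and> p \<le> qq n lam j \<and>
      qq n lam j < q \<and> q \<le> qq n lam (j + 1) \<and> qq n lam (j + 1) < q' \<and> q' \<le> n \<and>
      \<pi> q < \<pi> q' \<and> \<pi> q' < \<pi> p"
    using \<open>1 \<le> j\<close> \<open>j < card ?R\<close> pos \<open>\<pi> q < \<pi> q'\<close> \<open>\<not> \<pi> p \<le> \<pi> q'\<close>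
    by (simp add: not_le)
  then show False using nc unfolding R_312_containing_def by blast
qed

lemma R_312_avoiding_rank_below:
  assumes bij: "bij_betw \<pi> {1..n} {1..n}" and nc: "\<not> R_312_containing n lam \<pi>"
    and cols: "1 \<le> l" "l \<le> c" "c \<le> lam 1"
    and x: "x \<in> {1..n}" "x \<notin> \<pi> ` {1..zeta n lam l}"
    and a: "a \<in> \<pi> ` {1..zeta n lam c}" "x < a"
  shows "{b \<in> \<pi> ` {1..zeta n lam l}. b < x} \<subseteq> \<pi> ` {1..zeta n lam c}"
proof
  fix b assume "b \<in> {b \<in> \<pi> ` {1..zeta n lam l}. b < x}"
  then obtain q where q: "q \<in> {1..zeta n lam l}" "\<pi> q < x" "b = \<pi> q" by blast
  show "b \<in> \<pi> ` {1..zeta n lam c}"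
  proof (rule ccontr)
    assume "b \<notin> \<pi> ` {1..zeta n lam c}"
    then have "q \<notin> {1..zeta n lam c}" using q(3) by blast
    then have "zeta n lam c < q" using q(1) by simp
    obtain p where p: "p \<in> {1..zeta n lam c}" "a = \<pi> p" using a(1) by blast
    have "x \<in> \<pi> ` {1..n}" using x(1) bij by (simp add: bij_betw_def)
    then obtain q' where q': "q' \<in> {1..n}" "x = \<pi> q'" by blast
    then have "q' \<notin> {1..zeta n lam l}" using x(2) by blast
    then have "zeta n lam l < q'" using q'(1) by simp
    have "zeta n lam c \<le> zeta n lam l" using zeta_antimono[OF cols(2)] .
    then have "zeta n lam c \<in> Rset n lam" "zeta n lam l \<in> Rset n lam"
      using cols \<open>zeta n lam l < q'\<close> q'(1) unfolding Rset_def by force+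
    from R_312_avoiding_across[OF nc this, of p q q'] have "a \<le> x"
      using p q q' \<open>zeta n lam c < q\<close> \<open>zeta n lam l < q'\<close> by simp
    then show False using a(2) by simp
  qed
qed

lemma le_key_if_not_in_key_column:
  assumes bij: "bij_betw \<pi> {1..n} {1..n}" and nc: "\<not> R_312_containing n lam \<pi>"
    and shapes: "in_shape n lam c i" "in_shape n lam l k" and "l \<le> c" "i \<le> k"
    and x: "x \<in> {1..n}" "x \<le> key n lam \<pi> c i" "x \<notin> \<pi> ` {1..zeta n lam l}"
  shows "x \<le> key n lam \<pi> l k"
proof -
  let ?A = "\<pi> ` {1..zeta n lam c}" and ?B = "\<pi> ` {1..zeta n lam l}"
  have "?A \<subseteq> ?B" using zeta_antimono[OF \<open>l \<le> c\<close>, of n lam] by (intro image_mono) simp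
  have rank_A: "card {a \<in> ?A. a < x} < i" using le_key_iff[OF bij shapes(1)] x(2) by simp
  have "i \<le> card ?A" using shapes(1) card_key_column[OF bij] unfolding in_shape_def by simp
  have "{a \<in> ?A. a < x} \<noteq> ?A"
  proof
    assume "{a \<in> ?A. a < x} = ?A"
    then show False using rank_A \<open>i \<le> card ?A\<close> by simp
  qed
  then obtain a where a: "a \<in> ?A" "\<not> a < x" by blast
  then have "a \<noteq> x" using \<open>?A \<subseteq> ?B\<close> x(3) by blast
  then have "x < a" using a(2) by simp
  have "1 \<le> l" "c \<le> lam 1" using shapes unfolding in_shape_def by simp_all
  then have "{b \<in> ?B. b < x} \<subseteq> {a \<in> ?A. a < x}"
    using R_312_avoiding_rank_below[OF bij nc _ \<open>l \<le> c\<close> _ x(1,3) a(1) \<open>x < a\<close>] by blast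
  then have "card {b \<in> ?B. b < x} \<le> card {a \<in> ?A. a < x}" by (rule card_mono[rotated]) simp
  then show ?thesis using le_key_iff[OF bij shapes(2)] rank_A \<open>i \<le> k\<close> by simp
qed

lemma scan_output_le_key:
  assumes bij: "bij_betw \<pi> {1..n} {1..n}" and nc: "\<not> R_312_containing n lam \<pi>"
    and T: "tableau n lam T" and T_le: "tab_le n lam T (key n lam \<pi>)"
    and l: "1 \<le> l" "l \<le> lam 1"
  shows "t < zeta n lam l \<Longrightarrow> scan_output n lam T l t \<le> key n lam \<pi> l (zeta n lam l - t)"
proof -
  let ?B = "\<pi> ` {1..zeta n lam l}"
  let ?x = "scan_output n lam T l"
  have shape: "in_shape n lam l (zeta n lam l - t)" if "t < zeta n lam l" for t
    using that l unfolding in_shape_def by auto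
  have reduce: "?x t \<le> key n lam \<pi> l (zeta n lam l - t)"
    if t: "t < zeta n lam l" and rank: "?x t \<in> ?B \<Longrightarrow> card {b \<in> ?B. b < ?x t} < zeta n lam l - t"
    for t
  proof (cases "?x t \<in> ?B")
    case True
    then show ?thesis using rank le_key_iff[OF bij shape[OF t]] by simp
  next
    case False
    obtain c i where c: "l \<le> c" "in_shape n lam c i" "i \<le> zeta n lam l - t" "?x t = T c i"
      using scan_output_attained[OF T l t] by blast
    have "?x t \<in> {1..n}" "?x t \<le> key n lam \<pi> c i"
      using c T T_le unfolding tableau_def tab_le_def by auto
    then show ?thesis
      using le_key_if_not_in_key_column[OF bij nc c(2) shape[OF t] c(1,3)] False by blast
  qed
  show "t < zeta n lam l \<Longrightarrow> ?x t \<le> key n lam \<pi> l (zeta n lam l - t)"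
  proof (induction t)
    case 0
    have "card {b \<in> ?B. b < ?x 0} < card ?B" if "?x 0 \<in> ?B"
      using that by (intro psubset_card_mono) auto
    then show ?case using reduce[OF "0.prems"] card_key_column[OF bij] by simp
  next
    case (Suc t)
    have "?x (Suc t) < ?x t" using scan_output_Suc_less[OF T l _ Suc.prems] Suc.prems by simp
    have "card {b \<in> ?B. b < ?x t} < zeta n lam l - t"
      using Suc le_key_iff[OF bij shape] by simp
    moreover have "card (insert (?x (Suc t)) {b \<in> ?B. b < ?x (Suc t)}) \<le> card {b \<in> ?B. b < ?x t}"
      if "?x (Suc t) \<in> ?B"
      using that \<open>?x (Suc t) < ?x t\<close> by (intro card_mono) auto
    ultimately show ?case using reduce[OF Suc.prems] by fastforce
  qed
qed

lemma tab_le_scanning: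
  assumes "tableau n lam T"
  shows "tab_le n lam T (scanning n lam T)"
  unfolding tab_le_def
proof (intro allI impI)
  fix l k assume shape: "in_shape n lam l k"
  then have "1 \<le> l" "l \<le> lam 1" "zeta n lam l - k < zeta n lam l"
    "zeta n lam l - (zeta n lam l - k) = k"
    unfolding in_shape_def by auto
  then show "T l k \<le> scanning n lam T l k"
    using first_le_scan_output[OF assms] scanning_eq_scan_output[OF shape] by metis
qed

lemma scanning_le_key:
  assumes bij: "bij_betw \<pi> {1..n} {1..n}" and nc: "\<not> R_312_containing n lam \<pi>"
    and T: "tableau n lam T" and T_le: "tab_le n lam T (key n lam \<pi>)"
  shows "tab_le n lam (scanning n lam T) (key n lam \<pi>)"
  unfolding tab_le_def
proof (intro allI impI)
  fix l k assume shape: "in_shape n lam l k"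
  then have "1 \<le> l" "l \<le> lam 1" "zeta n lam l - k < zeta n lam l"
    "zeta n lam l - (zeta n lam l - k) = k"
    unfolding in_shape_def by auto
  then show "scanning n lam T l k \<le> key n lam \<pi> l k"
    using scan_output_le_key[OF bij nc T T_le] scanning_eq_scan_output[OF shape] by metis
qed

theorem theorem6p3:
  fixes n :: nat and lam \<pi> :: "nat \<Rightarrow> nat"
  assumes "1 \<le> n"
    and "partition n lam"
    and "R_perm n lam \<pi>"
    and "\<not> R_312_containing n lam \<pi>"
  shows "Demazure n lam \<pi> = {T \<in> Tabs n lam. tab_le n lam T (key n lam \<pi>)}"
proof -
  have bij: "bij_betw \<pi> {1..n} {1..n}" using assms(3) unfolding R_perm_def by simp
  have "tab_le n lam T (key n lam \<pi>) \<longleftrightarrow> tab_le n lam (scanning n lam T) (key n lam \<pi>)"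
    if "tableau n lam T" for T
    using tab_le_scanning[OF that] scanning_le_key[OF bij assms(4) that]
    unfolding tab_le_def by (meson order_trans)
  then show ?thesis unfolding Demazure_def Tabs_def by auto
qed

end
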